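(* Let $(\mathcal{A}_G[[\lambda]],\star_G)$ be a right universal deformation of a group $G$ and let $\tau:G\times X\to X$ be a left action of $G$ on a set $X$. Define $\mathcal{A}_X$ and $\star_X$ by $(f_1\star_Xf_2)(x)=(\alpha^xf_1\star_G\alpha^xf_2)(e)$. Then: (1) $(\mathcal{A}_X[[\lambda]],\star_X)$ is an associative formal deformation of $\mathcal{A}_X$, which is Hermitian if $\star_G$ is Hermitian, and for every $x\in X$ the map $\alpha^x:(\mathcal{A}_X[[\lambda]],\star_X)\to(\mathcal{A}_G[[\lambda]],\star_G)$ is an algebra homomorphism, i.e. $\alpha^x(f_1\star_Xf_2)=\alpha^xf_1\star_G\alpha^xf_2$. (2) If $f_1\in\mathcal{A}_X[[\lambda]]$ has all coefficients constant on an orbit $G.x_0$, then $(f_1\star_Xf_2)(g.x_0)=f_1(g.x_0)f_2(g.x_0)=(f_2\star_Xf_1)(g.x_0)$ for all $f_2\in\mathcal{A}_X[[\lambda]]$ and $g\in G$; in particular, if $f_1$ is constant along every orbit, then $f_1\star_Xf_2=f_1f_2=f_2\star_Xf_1$.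
   Context: $G$ is a group with unit $e$, right translations $R_g(h)=hg$ and left translations $L_g(h)=gh$. $\mathcal A_G$ is a subalgebra of the algebra $\mathrm{Fun}(G)$ of complex-valued functions on $G$, containing $1$, closed under complex conjugation, with $R_g^*\mathcal A_G\subseteq\mathcal A_G$ for all $g$. A right universal deformation is an associative $\mathbb C[[\lambda]]$-bilinear product $\star_G$ on $\mathcal A_G[[\lambda]]$ whose zeroth order is the pointwise product, with $1\star_Gf=f=f\star_G1$, and such that $R_g^*(f_1\star_Gf_2)=R_g^*f_1\star_GR_g^*f_2$ for all $g\in G$. It is Hermitian if $\overline{f_1\star_Gf_2}=\overline{f_2}\star_G\overline{f_1}$ ($\lambda$ real). For the action write $g.x=\tau(g,x)$, $\tau_g=\tau(g,\cdot)$, and define $\alpha^x:\mathrm{Fun}(X)\to\mathrm{Fun}(G)$ by $(\alpha^xf)(g)=f(g.x)=(\tau_g^*f)(x)$, extended $\mathbb C[[\lambda]]$-linearly. $\mathcal A_X=\{f\in\mathrm{Fun}(X):\alpha^xf\in\mathcal A_G\text{ for all }x\in X\}$. *)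

theory Defs
  imports Complex_Main
begin

class mgroup = monoid_mult + inverse +
  assumes mgroup_left_inverse: "inverse a * a = 1"

text \<open>Formal power series with coefficients in functions on a set:
  a series F in Fun(S)[[lambda]] is its coefficient sequence F n :: S => complex.\<close>
type_synonym 'a fser = "nat \<Rightarrow> 'a \<Rightarrow> complex"

definition ser_in :: "('a \<Rightarrow> complex) set \<Rightarrow> 'a fser set" where
  "ser_in A = {F. \<forall>n. F n \<in> A}"

definition ser_add :: "'a fser \<Rightarrow> 'a fser \<Rightarrow> 'a fser" where
  "ser_add F H = (\<lambda>n p. F n p + H n p)"

definition ser_smult :: "(nat \<Rightarrow> complex) \<Rightarrow> 'a fser \<Rightarrow> 'a fser" where
  "ser_smult c F = (\<lambda>n p. \<Sum>k\<le>n. c k * F (n - k) p)"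

definition ser_mult :: "'a fser \<Rightarrow> 'a fser \<Rightarrow> 'a fser" where
  "ser_mult F H = (\<lambda>n p. \<Sum>k\<le>n. F k p * H (n - k) p)"

definition ser_one :: "'a fser" where
  "ser_one = (\<lambda>n p. if n = 0 then 1 else 0)"

text \<open>Complex conjugation (lambda real).\<close>
definition ser_cnj :: "'a fser \<Rightarrow> 'a fser" where
  "ser_cnj F = (\<lambda>n p. cnj (F n p))"

definition subalgebra :: "('a \<Rightarrow> complex) set \<Rightarrow> bool" where
  "subalgebra A \<longleftrightarrow> (\<lambda>_. 1) \<in> A
     \<and> (\<forall>f\<in>A. \<forall>h\<in>A. (\<lambda>p. f p + h p) \<in> A \<and> (\<lambda>p. f p * h p) \<in> A)
     \<and> (\<forall>c f. f \<in> A \<longrightarrow> (\<lambda>p. c * f p) \<in> A)"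

definition formal_deformation :: "('a \<Rightarrow> complex) set \<Rightarrow> ('a fser \<Rightarrow> 'a fser \<Rightarrow> 'a fser) \<Rightarrow> bool" where
  "formal_deformation A star \<longleftrightarrow> subalgebra A
    \<and> (\<forall>F\<in>ser_in A. \<forall>H\<in>ser_in A. star F H \<in> ser_in A)
    \<and> (\<forall>F\<in>ser_in A. \<forall>F'\<in>ser_in A. \<forall>H\<in>ser_in A.
         star (ser_add F F') H = ser_add (star F H) (star F' H)
       \<and> star H (ser_add F F') = ser_add (star H F) (star H F'))
    \<and> (\<forall>c. \<forall>F\<in>ser_in A. \<forall>H\<in>ser_in A.
         star (ser_smult c F) H = ser_smult c (star F H)
       \<and> star H (ser_smult c F) = ser_smult c (star H F))
    \<and> (\<forall>F\<in>ser_in A. \<forall>H\<in>ser_in A. star F H 0 = (\<lambda>p. F 0 p * H 0 p))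
    \<and> (\<forall>F\<in>ser_in A. \<forall>H\<in>ser_in A. \<forall>K\<in>ser_in A. star (star F H) K = star F (star H K))
    \<and> (\<forall>F\<in>ser_in A. star ser_one F = F \<and> star F ser_one = F)"

definition hermitian :: "('a \<Rightarrow> complex) set \<Rightarrow> ('a fser \<Rightarrow> 'a fser \<Rightarrow> 'a fser) \<Rightarrow> bool" where
  "hermitian A star \<longleftrightarrow>
     (\<forall>F\<in>ser_in A. \<forall>H\<in>ser_in A. ser_cnj (star F H) = star (ser_cnj H) (ser_cnj F))"

definition Rpull :: "'g::mgroup \<Rightarrow> 'g fser \<Rightarrow> 'g fser" where
  "Rpull g F = (\<lambda>n h. F n (h * g))"

definition right_universal_deformation ::
  "('g::mgroup \<Rightarrow> complex) set \<Rightarrow> ('g fser \<Rightarrow> 'g fser \<Rightarrow> 'g fser) \<Rightarrow> bool" where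
  "right_universal_deformation A star \<longleftrightarrow>
     subalgebra A
     \<and> (\<forall>f\<in>A. (\<lambda>p. cnj (f p)) \<in> A)
     \<and> (\<forall>g. \<forall>f\<in>A. (\<lambda>h. f (h * g)) \<in> A)
     \<and> formal_deformation A star
     \<and> (\<forall>g. \<forall>F\<in>ser_in A. \<forall>H\<in>ser_in A. Rpull g (star F H) = star (Rpull g F) (Rpull g H))"

definition left_action :: "('g::mgroup \<Rightarrow> 'x \<Rightarrow> 'x) \<Rightarrow> bool" where
  "left_action tau \<longleftrightarrow> (\<forall>x. tau 1 x = x) \<and> (\<forall>g h x. tau (g * h) x = tau g (tau h x))"

definition alpha :: "('g \<Rightarrow> 'x \<Rightarrow> 'x) \<Rightarrow> 'x \<Rightarrow> 'x fser \<Rightarrow> 'g fser" where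
  "alpha tau x F = (\<lambda>n g. F n (tau g x))"

definition AX :: "('g \<Rightarrow> complex) set \<Rightarrow> ('g \<Rightarrow> 'x \<Rightarrow> 'x) \<Rightarrow> ('x \<Rightarrow> complex) set" where
  "AX AG tau = {f. \<forall>x. (\<lambda>g. f (tau g x)) \<in> AG}"

definition starX :: "('g::mgroup fser \<Rightarrow> 'g fser \<Rightarrow> 'g fser) \<Rightarrow> ('g \<Rightarrow> 'x \<Rightarrow> 'x)
    \<Rightarrow> 'x fser \<Rightarrow> 'x fser \<Rightarrow> 'x fser" where
  "starX starG tau F H = (\<lambda>n x. starG (alpha tau x F) (alpha tau x H) n 1)"

end

theory Submission
  imports Defs
begin

text \<open>Every coefficient of (f1 *X f2)(g.x) is read off at the unit from the product of the
  pulled-back series alpha^(g.x) f = R_g^* (alpha^x f); right invariance of *G moves R_g^* out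
  of the product, so alpha^x is multiplicative. All algebraic laws of *X are then inherited
  from *G through the maps alpha^x, since a series on X is recovered from its pull-backs by
  evaluating them at the unit. If f1 is constant on the orbit of x0, its pull-back along
  g.x0 is a constant series, i.e. a scalar in C[[lambda]], and a scalar acts by the
  C[[lambda]]-module structure, which is the pointwise product.\<close>

lemma ser_in_AX_iff: "F \<in> ser_in (AX AG tau) \<longleftrightarrow> (\<forall>x. alpha tau x F \<in> ser_in AG)"
  by (auto simp: ser_in_def AX_def alpha_def)

lemma alpha_in_ser_in: "F \<in> ser_in (AX AG tau) \<Longrightarrow> alpha tau x F \<in> ser_in AG"
  by (simp add: ser_in_AX_iff)

lemma alpha_act: "left_action tau \<Longrightarrow> alpha tau (tau g x) F = Rpull g (alpha tau x F)"
  by (simp add: alpha_def Rpull_def left_action_def)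

lemma alpha_at_one: "left_action tau \<Longrightarrow> alpha tau x F n 1 = F n x"
  by (simp add: alpha_def left_action_def)

lemma alpha_ser_add: "alpha tau x (ser_add F H) = ser_add (alpha tau x F) (alpha tau x H)"
  by (simp add: alpha_def ser_add_def)

lemma alpha_ser_smult: "alpha tau x (ser_smult c F) = ser_smult c (alpha tau x F)"
  by (simp add: alpha_def ser_smult_def)

lemma alpha_ser_one: "alpha tau x ser_one = ser_one"
  by (simp add: alpha_def ser_one_def)

lemma alpha_ser_cnj: "alpha tau x (ser_cnj F) = ser_cnj (alpha tau x F)"
  by (simp add: alpha_def ser_cnj_def)

lemma alpha_starX:
  assumes R: "right_universal_deformation AG starG" and L: "left_action tau"
    and F: "F \<in> ser_in (AX AG tau)" and H: "H \<in> ser_in (AX AG tau)"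
  shows "alpha tau x (starX starG tau F H) = starG (alpha tau x F) (alpha tau x H)"
proof (intro ext)
  fix n g
  have invariant: "Rpull g (starG (alpha tau x F) (alpha tau x H))
      = starG (Rpull g (alpha tau x F)) (Rpull g (alpha tau x H))"
    using R alpha_in_ser_in[OF F] alpha_in_ser_in[OF H]
    unfolding right_universal_deformation_def by blast
  have "alpha tau x (starX starG tau F H) n g
      = starG (alpha tau (tau g x) F) (alpha tau (tau g x) H) n 1"
    by (simp add: alpha_def starX_def)
  also have "\<dots> = Rpull g (starG (alpha tau x F) (alpha tau x H)) n 1"
    by (simp add: alpha_act[OF L] invariant)
  also have "\<dots> = starG (alpha tau x F) (alpha tau x H) n g"
    by (simp add: Rpull_def)
  finally show "alpha tau x (starX starG tau F H) n g = starG (alpha tau x F) (alpha tau x H) n g" .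
qed

lemma subalgebra_AX: "subalgebra AG \<Longrightarrow> subalgebra (AX AG tau)"
  by (auto simp: subalgebra_def AX_def)

lemma starX_closed:
  assumes R: "right_universal_deformation AG starG" and L: "left_action tau"
    and F: "F \<in> ser_in (AX AG tau)" and H: "H \<in> ser_in (AX AG tau)"
  shows "starX starG tau F H \<in> ser_in (AX AG tau)"
proof -
  have "\<forall>F\<in>ser_in AG. \<forall>H\<in>ser_in AG. starG F H \<in> ser_in AG"
    using R by (simp add: right_universal_deformation_def formal_deformation_def)
  then show ?thesis
    using alpha_in_ser_in[OF F] alpha_in_ser_in[OF H]
    by (simp add: ser_in_AX_iff alpha_starX[OF R L F H])
qed

lemma starX_ser_add:
  assumes D: "formal_deformation AG starG"
    and F: "F \<in> ser_in (AX AG tau)" and F': "F' \<in> ser_in (AX AG tau)"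
    and H: "H \<in> ser_in (AX AG tau)"
  shows "starX starG tau (ser_add F F') H = ser_add (starX starG tau F H) (starX starG tau F' H)"
    and "starX starG tau H (ser_add F F') = ser_add (starX starG tau H F) (starX starG tau H F')"
proof -
  have "starG (ser_add (alpha tau x F) (alpha tau x F')) (alpha tau x H)
      = ser_add (starG (alpha tau x F) (alpha tau x H)) (starG (alpha tau x F') (alpha tau x H))"
    "starG (alpha tau x H) (ser_add (alpha tau x F) (alpha tau x F'))
      = ser_add (starG (alpha tau x H) (alpha tau x F)) (starG (alpha tau x H) (alpha tau x F'))"
    for x
    using D alpha_in_ser_in[OF F] alpha_in_ser_in[OF F'] alpha_in_ser_in[OF H]
    unfolding formal_deformation_def by blast+
  then show "starX starG tau (ser_add F F') H = ser_add (starX starG tau F H) (starX starG tau F' H)"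
    and "starX starG tau H (ser_add F F') = ser_add (starX starG tau H F) (starX starG tau H F')"
    by (simp_all add: starX_def alpha_ser_add, simp_all add: ser_add_def)
qed

lemma starX_ser_smult:
  assumes D: "formal_deformation AG starG"
    and F: "F \<in> ser_in (AX AG tau)" and H: "H \<in> ser_in (AX AG tau)"
  shows "starX starG tau (ser_smult c F) H = ser_smult c (starX starG tau F H)"
    and "starX starG tau H (ser_smult c F) = ser_smult c (starX starG tau H F)"
proof -
  have "starG (ser_smult c (alpha tau x F)) (alpha tau x H)
      = ser_smult c (starG (alpha tau x F) (alpha tau x H))"
    "starG (alpha tau x H) (ser_smult c (alpha tau x F))
      = ser_smult c (starG (alpha tau x H) (alpha tau x F))"
    for x
    using D alpha_in_ser_in[OF F] alpha_in_ser_in[OF H]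
    unfolding formal_deformation_def by blast+
  then show "starX starG tau (ser_smult c F) H = ser_smult c (starX starG tau F H)"
    and "starX starG tau H (ser_smult c F) = ser_smult c (starX starG tau H F)"
    by (simp_all add: starX_def alpha_ser_smult, simp_all add: ser_smult_def)
qed

lemma starX_zeroth_order:
  assumes D: "formal_deformation AG starG" and L: "left_action tau"
    and F: "F \<in> ser_in (AX AG tau)" and H: "H \<in> ser_in (AX AG tau)"
  shows "starX starG tau F H 0 = (\<lambda>x. F 0 x * H 0 x)"
proof -
  have "starG (alpha tau x F) (alpha tau x H) 0 = (\<lambda>g. alpha tau x F 0 g * alpha tau x H 0 g)"
    for x
    using D alpha_in_ser_in[OF F] alpha_in_ser_in[OF H]
    unfolding formal_deformation_def by blast
  then show ?thesis
    by (simp add: starX_def alpha_at_one[OF L])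
qed

lemma starX_ser_one:
  assumes D: "formal_deformation AG starG" and L: "left_action tau"
    and F: "F \<in> ser_in (AX AG tau)"
  shows "starX starG tau ser_one F = F" and "starX starG tau F ser_one = F"
proof -
  have "starG ser_one (alpha tau x F) = alpha tau x F" "starG (alpha tau x F) ser_one = alpha tau x F"
    for x
    using D alpha_in_ser_in[OF F] unfolding formal_deformation_def by blast+
  then show "starX starG tau ser_one F = F" and "starX starG tau F ser_one = F"
    by (simp_all add: starX_def alpha_ser_one alpha_at_one[OF L])
qed

lemma starX_assoc:
  assumes R: "right_universal_deformation AG starG" and L: "left_action tau"
    and F: "F \<in> ser_in (AX AG tau)" and H: "H \<in> ser_in (AX AG tau)"
    and K: "K \<in> ser_in (AX AG tau)"
  shows "starX starG tau (starX starG tau F H) K = starX starG tau F (starX starG tau H K)"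
proof -
  have "formal_deformation AG starG"
    using R by (simp add: right_universal_deformation_def)
  then have "starG (starG (alpha tau x F) (alpha tau x H)) (alpha tau x K)
      = starG (alpha tau x F) (starG (alpha tau x H) (alpha tau x K))" for x
    using alpha_in_ser_in[OF F] alpha_in_ser_in[OF H] alpha_in_ser_in[OF K]
    unfolding formal_deformation_def by blast
  then show ?thesis
    unfolding starX_def[of starG tau "starX starG tau F H" K]
      starX_def[of starG tau F "starX starG tau H K"]
    by (simp add: alpha_starX[OF R L F H] alpha_starX[OF R L H K])
qed

lemma formal_deformation_starX:
  assumes R: "right_universal_deformation AG starG" and L: "left_action tau"
  shows "formal_deformation (AX AG tau) (starX starG tau)"
proof -
  have D: "formal_deformation AG starG" and S: "subalgebra AG"
    using R by (simp_all add: right_universal_deformation_def)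
  show ?thesis
    unfolding formal_deformation_def
    by (intro conjI ballI allI subalgebra_AX[OF S] starX_closed[OF R L] starX_ser_add[OF D]
        starX_ser_smult[OF D] starX_zeroth_order[OF D L] starX_assoc[OF R L] starX_ser_one[OF D L])
qed

lemma hermitian_starX:
  assumes "hermitian AG starG"
  shows "hermitian (AX AG tau) (starX starG tau)"
  unfolding hermitian_def
proof (intro ballI ext)
  fix F H n x
  assume F: "F \<in> ser_in (AX AG tau)" and H: "H \<in> ser_in (AX AG tau)"
  have "ser_cnj (starG (alpha tau x F) (alpha tau x H))
      = starG (ser_cnj (alpha tau x H)) (ser_cnj (alpha tau x F))"
    using assms alpha_in_ser_in[OF F] alpha_in_ser_in[OF H] unfolding hermitian_def by blast
  then have "ser_cnj (starG (alpha tau x F) (alpha tau x H)) n 1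
      = starG (alpha tau x (ser_cnj H)) (alpha tau x (ser_cnj F)) n 1"
    by (simp add: alpha_ser_cnj)
  then show "ser_cnj (starX starG tau F H) n x = starX starG tau (ser_cnj H) (ser_cnj F) n x"
    by (simp add: starX_def ser_cnj_def)
qed

lemma ser_one_in_ser_in: "subalgebra A \<Longrightarrow> ser_one \<in> ser_in A"
proof -
  assume S: "subalgebra A"
  then have "(\<lambda>_. 1) \<in> A" and "(\<lambda>p. 0 * 1) \<in> A"
    unfolding subalgebra_def by blast+
  then show ?thesis by (simp add: ser_in_def ser_one_def)
qed

lemma ser_smult_ser_one: "ser_smult c ser_one = (\<lambda>n p. c n)"
proof (intro ext)
  fix n p
  have "ser_smult c ser_one n p = (\<Sum>k\<le>n. if k = n then c k else 0)"
    unfolding ser_smult_def ser_one_def by (rule sum.cong) auto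
  then show "ser_smult c ser_one n p = c n" by simp
qed

lemma formal_deformation_const_star:
  assumes D: "formal_deformation A star" and B: "B \<in> ser_in A"
  shows "star (\<lambda>n p. c n) B = ser_smult c B" and "star B (\<lambda>n p. c n) = ser_smult c B"
proof -
  have one: "ser_one \<in> ser_in A"
    using D ser_one_in_ser_in unfolding formal_deformation_def by blast
  have "star (ser_smult c ser_one) B = ser_smult c (star ser_one B)"
    "star B (ser_smult c ser_one) = ser_smult c (star B ser_one)"
    "star ser_one B = B" "star B ser_one = B"
    using D B one unfolding formal_deformation_def by blast+
  then show "star (\<lambda>n p. c n) B = ser_smult c B" and "star B (\<lambda>n p. c n) = ser_smult c B"
    by (simp_all add: ser_smult_ser_one)
qed

lemma alpha_orbit_const:
  assumes L: "left_action tau" and C: "\<forall>n g. F n (tau g x0) = F n x0"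
  shows "alpha tau (tau g x0) F = (\<lambda>n h. F n x0)"
proof (intro ext)
  fix n h
  have "F n (tau h (tau g x0)) = F n (tau (h * g) x0)"
    using L by (simp add: left_action_def)
  then show "alpha tau (tau g x0) F n h = F n x0"
    using C by (simp add: alpha_def)
qed

lemma starX_orbit_const:
  assumes D: "formal_deformation AG starG" and L: "left_action tau"
    and H: "H \<in> ser_in (AX AG tau)" and C: "\<forall>n g. F n (tau g x0) = F n x0"
  shows "starX starG tau F H n (tau g x0) = ser_mult F H n (tau g x0)"
    and "starX starG tau H F n (tau g x0) = ser_mult F H n (tau g x0)"
proof -
  have "ser_smult (\<lambda>n. F n x0) (alpha tau (tau g x0) H) n 1 = ser_mult F H n (tau g x0)"
    using C by (simp add: ser_smult_def ser_mult_def alpha_at_one[OF L])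
  then show "starX starG tau F H n (tau g x0) = ser_mult F H n (tau g x0)"
    and "starX starG tau H F n (tau g x0) = ser_mult F H n (tau g x0)"
    using formal_deformation_const_star[OF D alpha_in_ser_in[OF H], where c = "\<lambda>n. F n x0"]
    by (simp_all add: starX_def alpha_orbit_const[OF L C])
qed

lemma starX_invariant:
  assumes D: "formal_deformation AG starG" and L: "left_action tau"
    and H: "H \<in> ser_in (AX AG tau)" and C: "\<forall>x n g. F n (tau g x) = F n x"
  shows "starX starG tau F H = ser_mult F H" and "starX starG tau H F = ser_mult F H"
proof -
  have "starX starG tau F H n x = ser_mult F H n x \<and> starX starG tau H F n x = ser_mult F H n x"
    for n x
  proof -
    have "\<forall>n g. F n (tau g x) = F n x"
      using C by blast
    moreover have "tau 1 x = x"
      using L by (simp add: left_action_def)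
    ultimately show ?thesis
      using starX_orbit_const[OF D L H, where g = 1] by metis
  qed
  then show "starX starG tau F H = ser_mult F H" and "starX starG tau H F = ser_mult F H"
    by auto
qed

theorem proposition7p1:
  fixes AG :: "('g::mgroup \<Rightarrow> complex) set"
    and starG :: "'g fser \<Rightarrow> 'g fser \<Rightarrow> 'g fser"
    and tau :: "'g \<Rightarrow> 'x \<Rightarrow> 'x"
  assumes "right_universal_deformation AG starG"
    and "left_action tau"
  shows "formal_deformation (AX AG tau) (starX starG tau)
    \<and> (hermitian AG starG \<longrightarrow> hermitian (AX AG tau) (starX starG tau))
    \<and> (\<forall>x. \<forall>F\<in>ser_in (AX AG tau). \<forall>H\<in>ser_in (AX AG tau).
           alpha tau x (starX starG tau F H) = starG (alpha tau x F) (alpha tau x H))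
    \<and> (\<forall>x0. \<forall>F\<in>ser_in (AX AG tau). (\<forall>n g. F n (tau g x0) = F n x0) \<longrightarrow>
           (\<forall>H\<in>ser_in (AX AG tau). \<forall>g n.
              starX starG tau F H n (tau g x0) = ser_mult F H n (tau g x0)
            \<and> starX starG tau H F n (tau g x0) = ser_mult F H n (tau g x0)))
    \<and> (\<forall>F\<in>ser_in (AX AG tau). (\<forall>x n g. F n (tau g x) = F n x) \<longrightarrow>
           (\<forall>H\<in>ser_in (AX AG tau).
              starX starG tau F H = ser_mult F H \<and> starX starG tau H F = ser_mult F H))"
proof -
  have D: "formal_deformation AG starG"
    using assms(1) by (simp add: right_universal_deformation_def)
  show ?thesis
    using formal_deformation_starX[OF assms] hermitian_starX alpha_starX[OF assms]
      starX_orbit_const[OF D assms(2)] starX_invariant[OF D assms(2)]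
    by (intro conjI allI ballI impI) simp_all
qed

end
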